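(* Let $\mathcal{DP}^*_1$ be the digraph with vertex set $\{1,2\}$ and edge set $\{(1,1),(1,2),(2,2)\}$. For every positive integer $m$ there is a surjective homomorphism from $(\mathcal{DP}^*_1)^\omega$ to the digraph $(\{1,\dots,m\};\leq)$.
   Context: $(\mathcal{DP}^*_1)^\omega$ is the direct power of countably many copies of $\mathcal{DP}^*_1$: vertices are sequences in $\{1,2\}^\omega$, with an edge from $u$ to $v$ iff $(u_i,v_i)$ is an edge of $\mathcal{DP}^*_1$ for every $i$. The digraph $(\{1,\dots,m\};\leq)$ has an edge from $a$ to $b$ iff $a\leq b$. *)

theory Defs
  imports Main
begin

definition DP1_verts :: "nat set" where
  "DP1_verts = {1, 2}"

definition DP1_edge :: "nat \<Rightarrow> nat \<Rightarrow> bool" where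
  "DP1_edge a b \<longleftrightarrow> (a, b) \<in> {(1,1), (1,2), (2,2)}"

definition DP1_omega_verts :: "(nat \<Rightarrow> nat) set" where
  "DP1_omega_verts = {u. \<forall>i. u i \<in> DP1_verts}"

definition DP1_omega_edge :: "(nat \<Rightarrow> nat) \<Rightarrow> (nat \<Rightarrow> nat) \<Rightarrow> bool" where
  "DP1_omega_edge u v \<longleftrightarrow> (\<forall>i. DP1_edge (u i) (v i))"

definition digraph_hom ::
  "'a set \<Rightarrow> ('a \<Rightarrow> 'a \<Rightarrow> bool) \<Rightarrow> 'b set \<Rightarrow> ('b \<Rightarrow> 'b \<Rightarrow> bool) \<Rightarrow> ('a \<Rightarrow> 'b) \<Rightarrow> bool" where
  "digraph_hom V E W F h \<longleftrightarrow>
     (\<forall>x\<in>V. h x \<in> W) \<and> (\<forall>x\<in>V. \<forall>y\<in>V. E x y \<longrightarrow> F (h x) (h y))"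

end

theory Submission
  imports Defs
begin

text \<open>Count the coordinates equal to 2 among the first m - 1 positions. Along an edge of
  the power no coordinate can drop from 2 to 1, so this count is monotone; sequences
  beginning with k twos followed by ones realise every value k \<le> m - 1.\<close>

definition twos_below :: "nat \<Rightarrow> (nat \<Rightarrow> nat) \<Rightarrow> nat" where
  "twos_below n u = card {i. i < n \<and> u i = 2}"

lemma twos_below_le: "twos_below n u \<le> n"
proof -
  have "card {i. i < n \<and> u i = 2} \<le> card {..<n}"
    by (rule card_mono) auto
  then show ?thesis by (simp add: twos_below_def)
qed

lemma DP1_edge_from_two: "DP1_edge 2 b \<Longrightarrow> b = 2"
  by (simp add: DP1_edge_def)

lemma twos_below_mono:
  assumes "DP1_omega_edge u v"
  shows "twos_below n u \<le> twos_below n v"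
proof -
  have "v i = 2" if "u i = 2" for i
    using assms that DP1_edge_from_two unfolding DP1_omega_edge_def by metis
  then have "{i. i < n \<and> u i = 2} \<subseteq> {i. i < n \<and> v i = 2}"
    by blast
  then show ?thesis
    unfolding twos_below_def by (rule card_mono[rotated]) simp
qed

lemma twos_prefix_in_DP1_omega_verts:
  "(\<lambda>i. if i < k then 2 else 1) \<in> DP1_omega_verts"
  by (simp add: DP1_omega_verts_def DP1_verts_def)

lemma twos_below_twos_prefix:
  assumes "k \<le> n"
  shows "twos_below n (\<lambda>i. if i < k then 2 else 1) = k"
proof -
  have "{i. i < n \<and> (if i < k then 2 else 1 :: nat) = 2} = {..<k}"
    using assms by auto
  then show ?thesis by (simp add: twos_below_def)
qed

theorem mainTheorem7:
  fixes m :: nat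
  assumes "m \<ge> 1"
  shows "\<exists>h. digraph_hom DP1_omega_verts DP1_omega_edge {1..m} (\<lambda>a b. a \<le> b) h
             \<and> h ` DP1_omega_verts = {1..m}"
proof (intro exI conjI)
  let ?h = "\<lambda>u. 1 + twos_below (m - 1) u"
  have into: "?h u \<in> {1..m}" for u
    using twos_below_le[of "m - 1" u] assms by simp
  then show "digraph_hom DP1_omega_verts DP1_omega_edge {1..m} (\<lambda>a b. a \<le> b) ?h"
    by (simp add: digraph_hom_def twos_below_mono)
  have "k \<in> ?h ` DP1_omega_verts" if "k \<in> {1..m}" for k
  proof
    have "twos_below (m - 1) (\<lambda>i. if i < k - 1 then 2 else 1) = k - 1"
      using that by (intro twos_below_twos_prefix diff_le_mono) simp
    with that show "k = ?h (\<lambda>i. if i < k - 1 then 2 else 1)" by simp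
  qed (rule twos_prefix_in_DP1_omega_verts)
  with into show "?h ` DP1_omega_verts = {1..m}" by blast
qed

end
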